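(* Suppose that $N_i$ is a single-point process and Assumptions (1) stable unit treatment value, (2) exclusion restriction, (3) randomization, and (4) no anticipation hold. For any $t \in [0,T]$, we have \begin{eqnarray*} \mathrm{ACE}_Y(t) &=& \int_{0}^T E \{ \partial Y_{i\tau}(t)/ \partial \tau \mid \mathcal{T}_{i0} \leq \tau < \mathcal{T}_{i1} \} \Pr (\mathcal{T}_{i0} \leq \tau < \mathcal{T}_{i1} )\mathrm{d} \tau\\ &&- \int_{0}^T E \{ \partial Y_{i\tau}(t)/\partial \tau \mid \mathcal{T}_{i1} \leq \tau < \mathcal{T}_{i0} \} \Pr (\mathcal{T}_{i1} \leq \tau < \mathcal{T}_{i0} )\mathrm{d} \tau. \end{eqnarray*} If the monotonicity assumption ($\mathcal{T}_{i1} \leq \mathcal{T}_{i0}$ for each $i$) holds in addition, then for any $t \in [0,T]$, we have \begin{eqnarray*} \mathrm{ACE}_Y(t) &=& - \int_{0}^T E \{ \partial Y_{i\tau}(t)/\partial \tau \mid \mathcal{T}_{i1} \leq \tau < \mathcal{T}_{i0} \}\cdot \mathrm{ACE}_N(\tau) \mathrm{d} \tau. \end{eqnarray*}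
   Context: Units $i=1,\ldots,m$ are i.i.d.; $Z_i\in\{0,1\}$ is a binary instrumental variable onsetting at time $0$; the treatment $N_i(\cdot)$ and outcome $Y_i(\cdot)$ are simple point processes with bounded intensity observed on $[0,T]$, with $N_i(t)$ denoting $N_i([0,t])$. $N_i$ is a single-point process if $N_i(T)\leq 1$; its event time is $\mathcal{T}_i=\tau$ if $N_i(t)=1$ for $t\geq\tau$ and $N_i(t)=0$ for $t<\tau$, and $\mathcal{T}_i=T^+$ if $N_i(T)=0$. $N_{iz}(\cdot)$, $\mathcal{T}_{iz}$, $Y_{iz}(\cdot)$ are potential treatment process, event time and outcome process under $Z_i=z$; $Y_{iz\tau}(\cdot)$ is the potential outcome process under $Z_i=z$ and event time $\mathcal{T}_i=\tau$, with $Y_{iz}=Y_{iz,\mathcal{T}_{iz}}$. Assumptions: (1) no interference between units and no different versions of instrument and treatment process; (2) exclusion restriction: $Y_{iz'\tau}=Y_{iz\tau}$ for all $z,z'$, so write $Y_{i\tau}$; (3) randomization: $Z_i$ is independent of $\{N_{iz}(\cdot), Y_{i\tau}(\cdot): z\in\{0,1\}, \tau\in[0,T]\cup T^+\}$; (4) no anticipation: $Y_{i\tau}(t)=Y_{i\tau'}(t)$ for $\tau,\tau'\geq t$. Define $\mathrm{ACE}_N(t)=E\{N_{i1}(t)-N_{i0}(t)\}$ and $\mathrm{ACE}_Y(t)=E\{Y_{i1}(t)-Y_{i0}(t)\}$. *)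

theory Defs
  imports "HOL-Probability.Probability"
begin

text \<open>A simple point process observed on [0,T] is represented by its (finite) set of
event points; its counting function is N(t) = N([0,t]).\<close>
definition counting :: "real set \<Rightarrow> real \<Rightarrow> nat" where
  "counting S t = card (S \<inter> {0..t})"

definition single_point :: "real \<Rightarrow> (real \<Rightarrow> nat) \<Rightarrow> bool" where
  "single_point T N \<longleftrightarrow> N T \<le> 1"

text \<open>Event time of a counting function; None encodes T^+ (no event in [0,T]).\<close>
definition event_time :: "real \<Rightarrow> (real \<Rightarrow> nat) \<Rightarrow> real option" where
  "event_time T N = (if N T = 0 then None else
     Some (THE \<tau>. \<tau> \<in> {0..T} \<and> (\<forall>t\<in>{0..T}. (\<tau> \<le> t \<longrightarrow> N t = 1) \<and> (t < \<tau> \<longrightarrow> N t = 0))))"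

fun etime_le :: "real option \<Rightarrow> real \<Rightarrow> bool" where
  "etime_le None \<tau> = False"
| "etime_le (Some s) \<tau> = (s \<le> \<tau>)"

fun etime_leq :: "real option \<Rightarrow> real option \<Rightarrow> bool" where
  "etime_leq _ None = True"
| "etime_leq None (Some _) = False"
| "etime_leq (Some a) (Some b) = (a \<le> b)"

fun time_le_etime :: "real \<Rightarrow> real option \<Rightarrow> bool" where
  "time_le_etime t None = True"
| "time_le_etime t (Some s) = (t \<le> s)"

text \<open>Potential event time T_{iz}; z = True means z = 1.\<close>
definition pot_time :: "real \<Rightarrow> (bool \<Rightarrow> 'a \<Rightarrow> real set) \<Rightarrow> bool \<Rightarrow> 'a \<Rightarrow> real option" where
  "pot_time T P z \<omega> = event_time T (counting (P z \<omega>))"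

definition ACE_N :: "'a measure \<Rightarrow> (bool \<Rightarrow> 'a \<Rightarrow> real set) \<Rightarrow> real \<Rightarrow> real" where
  "ACE_N M P t = (\<integral>\<omega>. real (counting (P True \<omega>) t) - real (counting (P False \<omega>) t) \<partial>M)"

definition ACE_Y :: "'a measure \<Rightarrow> real \<Rightarrow> (bool \<Rightarrow> 'a \<Rightarrow> real set)
      \<Rightarrow> ('a \<Rightarrow> real option \<Rightarrow> real \<Rightarrow> real) \<Rightarrow> real \<Rightarrow> real" where
  "ACE_Y M T P Y t = (\<integral>\<omega>. Y \<omega> (pot_time T P True \<omega>) t - Y \<omega> (pot_time T P False \<omega>) t \<partial>M)"

definition cond_exp_event :: "'a measure \<Rightarrow> ('a \<Rightarrow> real) \<Rightarrow> 'a set \<Rightarrow> real" where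
  "cond_exp_event M X A = (\<integral>\<omega>. X \<omega> * indicator A \<omega> \<partial>M) / measure M A"

definition between_event :: "'a measure \<Rightarrow> real \<Rightarrow> (bool \<Rightarrow> 'a \<Rightarrow> real set) \<Rightarrow> bool \<Rightarrow> bool \<Rightarrow> real \<Rightarrow> 'a set" where
  "between_event M T P a b \<tau> = {\<omega> \<in> space M. etime_le (pot_time T P a \<omega>) \<tau> \<and> \<not> etime_le (pot_time T P b \<omega>) \<tau>}"

definition potential_sigma :: "'a measure \<Rightarrow> (bool \<Rightarrow> 'a \<Rightarrow> real set)
      \<Rightarrow> ('a \<Rightarrow> real option \<Rightarrow> real \<Rightarrow> real) \<Rightarrow> 'a set set" where
  "potential_sigma M P Y = sigma_sets (space M)
     ({{\<omega> \<in> space M. counting (P z \<omega>) t = k} | z t k. True}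
      \<union> {{\<omega> \<in> space M. Y \<omega> \<tau> t \<le> c} | \<tau> t c. True})"

end

theory Submission
  imports Defs
begin

(* Let c_z be the event time T_{iz} with T^+ replaced by T; by no anticipation
   Y_{iz}(t) = Y_{i,c_z}(t) for t \<le> T. The fundamental theorem of calculus in \<tau> gives,
   pointwise in \<omega>,
     Y_{i,c_1}(t) - Y_{i,c_0}(t) = \<integral> 1{T_{i0} \<le> \<tau> < T_{i1}} dY - \<integral> 1{T_{i1} \<le> \<tau> < T_{i0}} dY
   (the indicators agree with those of [c_0, c_1) up to the null set {T}). Taking expectations,
   Fubini exchanges the two integrals and E{X 1_A} = E{X | A} Pr(A) gives the first identity.
   Under monotonicity the event T_{i0} \<le> \<tau> < T_{i1} is empty and N_{i1}(\<tau>) - N_{i0}(\<tau>) is the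
   indicator of T_{i1} \<le> \<tau> < T_{i0}, whose probability is therefore ACE_N(\<tau>).
   ACE_Y and ACE_N are defined through potential outcomes. *)

lemma counting_empty [simp]: "counting {} t = 0"
  by (simp add: counting_def)

lemma counting_singleton: "0 \<le> s \<Longrightarrow> counting {s} t = (if s \<le> t then 1 else 0)"
  by (auto simp: counting_def Int_insert_left)

lemma event_time_counting_empty [simp]: "event_time T (counting {}) = None"
  by (simp add: event_time_def)

lemma event_time_counting_singleton:
  assumes s: "s \<in> {0..T}"
  shows "event_time T (counting {s}) = Some s"
proof -
  have "(THE \<tau>. \<tau> \<in> {0..T} \<and> (\<forall>t\<in>{0..T}. (\<tau> \<le> t \<longrightarrow> counting {s} t = 1)
                                      \<and> (t < \<tau> \<longrightarrow> counting {s} t = 0))) = s"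
  proof (rule the_equality)
    fix \<tau> assume \<tau>: "\<tau> \<in> {0..T} \<and> (\<forall>t\<in>{0..T}. (\<tau> \<le> t \<longrightarrow> counting {s} t = 1)
                                        \<and> (t < \<tau> \<longrightarrow> counting {s} t = 0))"
    show "\<tau> = s"
      using \<tau>[THEN conjunct2, rule_format, of s] \<tau>[THEN conjunct2, rule_format, of \<tau>] \<tau> s
      by (cases \<tau> s rule: linorder_cases) (auto simp: counting_singleton)
  qed (use s in \<open>auto simp: counting_singleton\<close>)
  then show ?thesis
    using s by (simp add: event_time_def counting_singleton)
qed

lemma single_point_cases:
  assumes "finite S" "S \<subseteq> {0..T}" "single_point T (counting S)"
  obtains "S = {}" | s where "s \<in> {0..T}" "S = {s}"
proof -
  have "card S \<le> 1"
    using assms by (simp add: single_point_def counting_def Int_absorb2)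
  then have "S = {} \<or> (\<exists>s. S = {s})"
    using \<open>finite S\<close> by (metis card_0_eq card_1_singletonE le_eq_less_or_eq less_one)
  then show thesis
    using that assms(2) by auto
qed

lemma counting_single_point:
  assumes "finite S" "S \<subseteq> {0..T}" "single_point T (counting S)"
  shows "counting S \<tau> = (if etime_le (event_time T (counting S)) \<tau> then 1 else 0)"
    and "event_time T (counting S) = Some s \<Longrightarrow> s \<in> {0..T}"
  by (rule single_point_cases[OF assms];
      auto simp: counting_singleton event_time_counting_singleton)+

definition etime_cap :: "real \<Rightarrow> real option \<Rightarrow> real" where
  "etime_cap T e = (case e of None \<Rightarrow> T | Some s \<Rightarrow> s)"

definition random_event_time :: "'a measure \<Rightarrow> real \<Rightarrow> ('a \<Rightarrow> real option) \<Rightarrow> bool" where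
  "random_event_time M T e \<longleftrightarrow>
     (\<forall>\<tau>. {\<omega> \<in> space M. etime_le (e \<omega>) \<tau>} \<in> sets M) \<and>
     (\<forall>\<omega>\<in>space M. \<forall>s. e \<omega> = Some s \<longrightarrow> s \<in> {0..T})"

definition etime_between :: "'a measure \<Rightarrow> ('a \<Rightarrow> real option) \<Rightarrow> ('a \<Rightarrow> real option) \<Rightarrow> real \<Rightarrow> 'a set" where
  "etime_between M e e' \<tau> = {\<omega> \<in> space M. etime_le (e \<omega>) \<tau> \<and> \<not> etime_le (e' \<omega>) \<tau>}"

lemma etime_le_iff_etime_cap:
  assumes "\<And>s. e = Some s \<Longrightarrow> s \<le> T"
  shows "etime_le e \<tau> \<longleftrightarrow> etime_le e T \<and> etime_cap T e \<le> \<tau>"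
    and "\<tau> < T \<Longrightarrow> etime_le e \<tau> \<longleftrightarrow> etime_cap T e \<le> \<tau>"
  using assms by (cases e; auto simp: etime_cap_def)+

lemma etime_cap_range: "0 \<le> T \<Longrightarrow> (\<And>s. e = Some s \<Longrightarrow> s \<in> {0..T}) \<Longrightarrow> etime_cap T e \<in> {0..T}"
  by (cases e) (auto simp: etime_cap_def)

lemma etime_le_mono: "etime_leq e e' \<Longrightarrow> etime_le e' \<tau> \<Longrightarrow> etime_le e \<tau>"
  by (cases e; cases e') auto

lemma pred_etime_le [measurable]: "Measurable.pred borel (etime_le e)"
proof (cases e)
  case None
  then have "etime_le e = (\<lambda>_. False)"
    by auto
  then show ?thesis
    by simp
next
  case (Some s)
  then have "etime_le e = (\<lambda>\<tau>. s \<le> \<tau>)"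
    by auto
  then show ?thesis
    by simp
qed

lemma borel_measurable_etime_cap:
  assumes "random_event_time M T e"
  shows "(\<lambda>\<omega>. etime_cap T (e \<omega>)) \<in> borel_measurable M"
  unfolding borel_measurable_iff_le
proof
  fix x
  have "{\<omega> \<in> space M. etime_cap T (e \<omega>) \<le> x} =
        (if T \<le> x then space M else {\<omega> \<in> space M. etime_le (e \<omega>) x})"
    using assms etime_le_iff_etime_cap(2)[of "e _" T x]
    by (auto simp: random_event_time_def etime_cap_def split: option.splits)
  then show "{\<omega> \<in> space M. etime_cap T (e \<omega>) \<le> x} \<in> sets M"
    using assms by (simp add: random_event_time_def)
qed

lemma pred_etime_le_pair:
  assumes "random_event_time M T e"
  shows "Measurable.pred (M \<Otimes>\<^sub>M lborel) (\<lambda>p. etime_le (e (fst p)) (snd p))"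
proof -
  have cap: "(\<lambda>\<omega>. etime_cap T (e \<omega>)) \<in> borel_measurable M"
    using assms by (rule borel_measurable_etime_cap)
  have "{\<omega> \<in> space M. etime_le (e \<omega>) T} \<in> sets M"
    using assms by (simp add: random_event_time_def)
  then have "Measurable.pred (M \<Otimes>\<^sub>M lborel) (\<lambda>p. etime_le (e (fst p)) T)"
    by (rule pred_sets1) simp
  moreover have "Measurable.pred (M \<Otimes>\<^sub>M lborel) (\<lambda>p. etime_cap T (e (fst p)) \<le> snd p)"
    using cap by measurable
  ultimately have pred: "Measurable.pred (M \<Otimes>\<^sub>M lborel)
                           (\<lambda>p. etime_le (e (fst p)) T \<and> etime_cap T (e (fst p)) \<le> snd p)"
    by (rule pred_intros_logic)
  have "etime_le (e (fst p)) (snd p) \<longleftrightarrow> etime_le (e (fst p)) T \<and> etime_cap T (e (fst p)) \<le> snd p"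
    if "p \<in> space (M \<Otimes>\<^sub>M lborel)" for p
    using assms that by (intro etime_le_iff_etime_cap(1)) (auto simp: random_event_time_def space_pair_measure)
  then show ?thesis
    by (rule measurable_cong[THEN iffD2, OF _ pred])
qed

lemma sets_etime_between:
  assumes "random_event_time M T e" "random_event_time M T e'"
  shows "etime_between M e e' \<tau> \<in> sets M"
proof -
  have "etime_between M e e' \<tau> = {\<omega> \<in> space M. etime_le (e \<omega>) \<tau>} - {\<omega> \<in> space M. etime_le (e' \<omega>) \<tau>}"
    by (auto simp: etime_between_def)
  then show ?thesis
    using assms by (auto simp: random_event_time_def)
qed

lemma pred_etime_between_pair:
  assumes "random_event_time M T e" "random_event_time M T e'"
  shows "Measurable.pred (M \<Otimes>\<^sub>M lborel) (\<lambda>p. fst p \<in> etime_between M e e' (snd p))"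
proof -
  note assms[THEN pred_etime_le_pair, measurable]
  have "Measurable.pred (M \<Otimes>\<^sub>M lborel) (\<lambda>p. etime_le (e (fst p)) (snd p) \<and> \<not> etime_le (e' (fst p)) (snd p))"
    by measurable
  moreover have "fst p \<in> etime_between M e e' (snd p) \<longleftrightarrow>
                 etime_le (e (fst p)) (snd p) \<and> \<not> etime_le (e' (fst p)) (snd p)"
    if "p \<in> space (M \<Otimes>\<^sub>M lborel)" for p
    using that by (auto simp: etime_between_def space_pair_measure)
  ultimately show ?thesis
    by (rule measurable_cong[THEN iffD2, rotated])
qed

lemma borel_measurable_continuous_on_compose:
  fixes G :: "'a \<Rightarrow> real \<Rightarrow> real" and S :: "'a \<Rightarrow> real"
  assumes "a \<le> b"
    and G_meas: "\<And>s. s \<in> {a..b} \<Longrightarrow> (\<lambda>\<omega>. G \<omega> s) \<in> borel_measurable M"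
    and G_cont: "\<And>\<omega>. \<omega> \<in> space M \<Longrightarrow> continuous_on {a..b} (G \<omega>)"
    and S_meas [measurable]: "S \<in> borel_measurable M"
    and S_range: "\<And>\<omega>. \<omega> \<in> space M \<Longrightarrow> S \<omega> \<in> {a..b}"
  shows "(\<lambda>\<omega>. G \<omega> (S \<omega>)) \<in> borel_measurable M"
proof (rule borel_measurable_LIMSEQ_real)
  define clamp where "clamp x = max a (min b x)" for x
  define q where "q n \<omega> = clamp (real_of_int \<lceil>S \<omega> * 2^n\<rceil> / 2^n)" for n \<omega>
  show "(\<lambda>\<omega>. G \<omega> (q n \<omega>)) \<in> borel_measurable M" for n
  proof -
    have "(\<lambda>\<omega>. \<lceil>S \<omega> * 2^n\<rceil>) \<in> measurable M (count_space UNIV)"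
      by measurable
    moreover have "(\<lambda>\<omega>. G \<omega> (clamp (real_of_int k / 2^n))) \<in> borel_measurable M" for k
      using G_meas \<open>a \<le> b\<close> by (simp add: clamp_def)
    ultimately show ?thesis
      unfolding q_def by (rule measurable_compose_countable[rotated])
  qed
  fix \<omega> assume \<omega>: "\<omega> \<in> space M"
  have q_bounds: "S \<omega> \<le> q n \<omega> \<and> q n \<omega> \<le> S \<omega> + (1/2)^n" for n
  proof -
    have "S \<omega> * 2^n \<le> \<lceil>S \<omega> * 2^n\<rceil>" "\<lceil>S \<omega> * 2^n\<rceil> \<le> S \<omega> * 2^n + 1"
      by (simp_all add: le_of_int_ceiling ceiling_le_iff)
    then have "S \<omega> \<le> \<lceil>S \<omega> * 2^n\<rceil> / 2^n" "\<lceil>S \<omega> * 2^n\<rceil> / 2^n \<le> S \<omega> + (1/2)^n"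
      by (simp_all add: field_simps power_divide)
    then show ?thesis
      using S_range[OF \<omega>] by (auto simp: q_def clamp_def)
  qed
  have "(\<lambda>n. S \<omega> + (1/2)^n) \<longlonglongrightarrow> S \<omega>"
    using tendsto_add[OF tendsto_const LIMSEQ_power_zero[of "1/2 :: real"], of "S \<omega>"] by simp
  then have q_lim: "(\<lambda>n. q n \<omega>) \<longlonglongrightarrow> S \<omega>"
    by (rule tendsto_sandwich[OF _ _ tendsto_const, rotated 2]) (use q_bounds in simp_all)
  have "continuous (at (S \<omega>) within {a..b}) (G \<omega>)"
    using G_cont[OF \<omega>] S_range[OF \<omega>] continuous_on_eq_continuous_within by blast
  moreover have "q n \<omega> \<in> {a..b}" for n
    using \<open>a \<le> b\<close> by (simp add: q_def clamp_def)
  ultimately show "(\<lambda>n. G \<omega> (q n \<omega>)) \<longlonglongrightarrow> G \<omega> (S \<omega>)"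
    using q_lim by (rule continuous_within_tendsto_compose')
qed

lemma integral_FTC_atLeastAtMost_integrable:
  fixes g g' :: "real \<Rightarrow> real"
  assumes "a \<le> b"
    and deriv: "\<And>x. x \<in> {a..b} \<Longrightarrow> (g has_real_derivative g' x) (at x within {a..b})"
    and int: "integrable lborel (\<lambda>x. indicator {a..b} x * g' x)"
  shows "(\<integral>x. indicator {a..b} x * g' x \<partial>lborel) = g b - g a"
proof -
  have "(g' has_integral g b - g a) {a..b}"
    using \<open>a \<le> b\<close> deriv
    by (intro fundamental_theorem_of_calculus) (auto simp: has_real_derivative_iff_has_vector_derivative)
  then have "((\<lambda>x. if x \<in> {a..b} then g' x else 0) has_integral g b - g a) UNIV"
    by (simp only: has_integral_restrict_UNIV)
  moreover have "(\<lambda>x. if x \<in> {a..b} then g' x else 0) = (\<lambda>x. indicator {a..b} x * g' x)"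
    by (auto simp: indicator_def)
  ultimately have "((\<lambda>x. indicator {a..b} x * g' x) has_integral g b - g a) UNIV"
    by simp
  then show ?thesis
    using has_integral_integral_lborel[OF int] by (rule has_integral_unique[rotated])
qed

lemma integral_etime_between_ordered:
  fixes e0 e1 :: "real option" and g g' :: "real \<Rightarrow> real"
  assumes "0 \<le> T"
    and range0: "\<And>s. e0 = Some s \<Longrightarrow> s \<in> {0..T}"
    and range1: "\<And>s. e1 = Some s \<Longrightarrow> s \<in> {0..T}"
    and ordered: "etime_cap T e0 \<le> etime_cap T e1"
    and deriv: "\<And>\<tau>. \<tau> \<in> {0..T} \<Longrightarrow> (g has_real_derivative g' \<tau>) (at \<tau> within {0..T})"
    and int: "integrable lborel (\<lambda>\<tau>. indicator {0..T} \<tau> * g' \<tau>)"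
  shows "(\<integral>\<tau>. indicator {0..T} \<tau> * g' \<tau> * of_bool (etime_le e0 \<tau> \<and> \<not> etime_le e1 \<tau>) \<partial>lborel)
           = g (etime_cap T e1) - g (etime_cap T e0)"
    and "(\<integral>\<tau>. indicator {0..T} \<tau> * g' \<tau> * of_bool (etime_le e1 \<tau> \<and> \<not> etime_le e0 \<tau>) \<partial>lborel) = 0"
proof -
  define c0 c1 where "c0 = etime_cap T e0" and "c1 = etime_cap T e1"
  have c0: "c0 \<in> {0..T}" and c1: "c1 \<in> {0..T}"
    unfolding c0_def c1_def using \<open>0 \<le> T\<close> range0 range1 by (blast intro: etime_cap_range)+
  have le0: "etime_le e0 \<tau> \<longleftrightarrow> c0 \<le> \<tau>" and le1: "etime_le e1 \<tau> \<longleftrightarrow> c1 \<le> \<tau>" if "\<tau> < T" for \<tau>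
    unfolding c0_def c1_def using that range0 range1
    by (auto intro!: etime_le_iff_etime_cap(2))
  have [measurable]: "(\<lambda>\<tau>. indicator {0..T} \<tau> * g' \<tau>) \<in> borel_measurable borel"
    using borel_measurable_integrable[OF int] by simp
  have [measurable]: "(\<lambda>\<tau>. indicator {0..T} \<tau> * g' \<tau> * of_bool (etime_le e \<tau> \<and> \<not> etime_le e' \<tau>))
                       \<in> borel_measurable borel" for e e'
    by measurable
  \<comment> \<open>The two sides differ only at \<open>\<tau> = T\<close>, where \<open>T\<^sup>+\<close> and its cap disagree, and at \<open>\<tau> = c1\<close>.\<close>
  have AE_between: "AE \<tau> in lborel.
      indicator {0..T} \<tau> * g' \<tau> * of_bool (etime_le e0 \<tau> \<and> \<not> etime_le e1 \<tau>) = indicator {c0..c1} \<tau> * g' \<tau> \<and>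
      indicator {0..T} \<tau> * g' \<tau> * of_bool (etime_le e1 \<tau> \<and> \<not> etime_le e0 \<tau>) = 0"
    using AE_lborel_singleton[of T] AE_lborel_singleton[of c1]
  proof eventually_elim
    case (elim \<tau>)
    show ?case
    proof (cases "0 \<le> \<tau> \<and> \<tau> < T")
      case True
      then show ?thesis
        using le0 le1 elim ordered by (auto simp: c0_def c1_def indicator_def)
    next
      case False
      then show ?thesis
        using elim c0 c1 by (auto simp: indicator_def)
    qed
  qed
  have "(\<lambda>\<tau>. indicator {c0..c1} \<tau> * g' \<tau>) = (\<lambda>\<tau>. indicator {c0..c1} \<tau> *\<^sub>R (indicator {0..T} \<tau> * g' \<tau>))"
    using c0 c1 by (auto simp: indicator_def)
  then have int_c: "integrable lborel (\<lambda>\<tau>. indicator {c0..c1} \<tau> * g' \<tau>)"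
    using integrable_mult_indicator[OF _ int, of "{c0..c1}"] by simp
  have "(\<integral>\<tau>. indicator {c0..c1} \<tau> * g' \<tau> \<partial>lborel) = g c1 - g c0"
  proof (rule integral_FTC_atLeastAtMost_integrable[OF _ _ int_c])
    show "c0 \<le> c1"
      using ordered by (simp add: c0_def c1_def)
    show "(g has_real_derivative g' x) (at x within {c0..c1})" if "x \<in> {c0..c1}" for x
      using deriv[of x] that c0 c1 by (auto intro: DERIV_subset)
  qed
  moreover have "(\<lambda>\<tau>. indicator {c0..c1} \<tau> * g' \<tau>) \<in> borel_measurable lborel"
    using borel_measurable_integrable[OF int_c] .
  ultimately show "(\<integral>\<tau>. indicator {0..T} \<tau> * g' \<tau> * of_bool (etime_le e0 \<tau> \<and> \<not> etime_le e1 \<tau>) \<partial>lborel)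
           = g (etime_cap T e1) - g (etime_cap T e0)"
    using AE_between by (subst integral_cong_AE) (auto simp: c0_def c1_def elim: eventually_mono)
  show "(\<integral>\<tau>. indicator {0..T} \<tau> * g' \<tau> * of_bool (etime_le e1 \<tau> \<and> \<not> etime_le e0 \<tau>) \<partial>lborel) = 0"
    using AE_between by (intro integral_eq_zero_AE) (auto elim: eventually_mono)
qed

lemma integral_etime_between_diff:
  fixes e0 e1 :: "real option" and g g' :: "real \<Rightarrow> real"
  assumes "0 \<le> T"
    and range0: "\<And>s. e0 = Some s \<Longrightarrow> s \<in> {0..T}"
    and range1: "\<And>s. e1 = Some s \<Longrightarrow> s \<in> {0..T}"
    and deriv: "\<And>\<tau>. \<tau> \<in> {0..T} \<Longrightarrow> (g has_real_derivative g' \<tau>) (at \<tau> within {0..T})"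
    and int: "integrable lborel (\<lambda>\<tau>. indicator {0..T} \<tau> * g' \<tau>)"
  shows "(\<integral>\<tau>. indicator {0..T} \<tau> * g' \<tau> * of_bool (etime_le e0 \<tau> \<and> \<not> etime_le e1 \<tau>) \<partial>lborel)
       - (\<integral>\<tau>. indicator {0..T} \<tau> * g' \<tau> * of_bool (etime_le e1 \<tau> \<and> \<not> etime_le e0 \<tau>) \<partial>lborel)
       = g (etime_cap T e1) - g (etime_cap T e0)"
proof (cases "etime_cap T e0 \<le> etime_cap T e1")
  case True
  with integral_etime_between_ordered[OF assms(1-3) _ deriv int] show ?thesis
    by simp
next
  case False
  with integral_etime_between_ordered[OF assms(1) range1 range0 _ deriv int] show ?thesis
    by simp
qed

lemma (in finite_measure) integral_mult_indicator_eq_cond_exp_event: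
  assumes "A \<in> sets M"
  shows "(\<integral>\<omega>. X \<omega> * indicator A \<omega> \<partial>M) = cond_exp_event M X A * measure M A"
proof (cases "measure M A = 0")
  case True
  then have "AE \<omega> in M. \<omega> \<notin> A"
    using assms by (intro AE_not_in) (simp add: null_sets_def emeasure_eq_measure)
  then have "(\<integral>\<omega>. X \<omega> * indicator A \<omega> \<partial>M) = 0"
    by (intro integral_eq_zero_AE) (auto elim: eventually_mono)
  with True show ?thesis
    by simp
qed (simp add: cond_exp_event_def)

lemma (in finite_measure) set_integral_cond_exp_event_Fubini:
  fixes f :: "'a \<Rightarrow> real \<Rightarrow> real" and B :: "real \<Rightarrow> 'a set"
  assumes B_pred: "Measurable.pred (M \<Otimes>\<^sub>M lborel) (\<lambda>p. fst p \<in> B (snd p))"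
    and B_sets: "\<And>\<tau>. B \<tau> \<in> sets M"
    and f_int: "integrable (M \<Otimes>\<^sub>M lborel) (\<lambda>(\<omega>, \<tau>). indicator A \<tau> * f \<omega> \<tau>)"
  shows "integrable M (\<lambda>\<omega>. \<integral>\<tau>. indicator A \<tau> * f \<omega> \<tau> * indicator (B \<tau>) \<omega> \<partial>lborel)"
    and "(LINT \<tau>:A|lborel. cond_exp_event M (\<lambda>\<omega>. f \<omega> \<tau>) (B \<tau>) * measure M (B \<tau>))
           = (\<integral>\<omega>. \<integral>\<tau>. indicator A \<tau> * f \<omega> \<tau> * indicator (B \<tau>) \<omega> \<partial>lborel \<partial>M)"
proof -
  interpret PS: pair_sigma_finite M lborel
    by (intro pair_sigma_finite.intro sigma_finite_measure_axioms lborel.sigma_finite_measure_axioms)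
  define F where "F \<omega> \<tau> = indicator A \<tau> * f \<omega> \<tau> * indicator (B \<tau>) \<omega>" for \<omega> \<tau>
  have "(\<lambda>p. indicator (B (snd p)) (fst p) :: real) \<in> borel_measurable (M \<Otimes>\<^sub>M lborel)"
    using B_pred by (simp add: indicator_def)
  then have "case_prod F \<in> borel_measurable (M \<Otimes>\<^sub>M lborel)"
    using borel_measurable_integrable[OF f_int] by (simp add: F_def case_prod_beta')
  then have F_int: "integrable (M \<Otimes>\<^sub>M lborel) (case_prod F)"
    by (rule Bochner_Integration.integrable_bound[OF f_int])
      (auto simp: F_def indicator_def split: prod.splits)
  show "integrable M (\<lambda>\<omega>. \<integral>\<tau>. indicator A \<tau> * f \<omega> \<tau> * indicator (B \<tau>) \<omega> \<partial>lborel)"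
    using PS.integrable_fst'[OF F_int] by (simp add: F_def)
  have "(\<integral>\<omega>. F \<omega> \<tau> \<partial>M) = indicator A \<tau> * (cond_exp_event M (\<lambda>\<omega>. f \<omega> \<tau>) (B \<tau>) * measure M (B \<tau>))" for \<tau>
    using integral_mult_indicator_eq_cond_exp_event[OF B_sets, of "\<lambda>\<omega>. f \<omega> \<tau>"]
    by (cases "\<tau> \<in> A") (simp_all add: F_def)
  then have "(LINT \<tau>:A|lborel. cond_exp_event M (\<lambda>\<omega>. f \<omega> \<tau>) (B \<tau>) * measure M (B \<tau>))
               = (\<integral>\<tau>. \<integral>\<omega>. F \<omega> \<tau> \<partial>M \<partial>lborel)"
    by (simp add: set_lebesgue_integral_def)
  also have "\<dots> = (\<integral>\<omega>. \<integral>\<tau>. F \<omega> \<tau> \<partial>lborel \<partial>M)"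
    using PS.Fubini_integral[OF F_int] by simp
  finally show "(LINT \<tau>:A|lborel. cond_exp_event M (\<lambda>\<omega>. f \<omega> \<tau>) (B \<tau>) * measure M (B \<tau>))
                  = (\<integral>\<omega>. \<integral>\<tau>. indicator A \<tau> * f \<omega> \<tau> * indicator (B \<tau>) \<omega> \<partial>lborel \<partial>M)"
    by (simp add: F_def)
qed

lemma integral_diff_etime_cap_eq_between:
  fixes e0 e1 :: "'a \<Rightarrow> real option" and g g' :: "'a \<Rightarrow> real \<Rightarrow> real"
  assumes M: "finite_measure M" and "0 \<le> T"
    and e0: "random_event_time M T e0" and e1: "random_event_time M T e1"
    and g_meas: "\<And>s. s \<in> {0..T} \<Longrightarrow> (\<lambda>\<omega>. g \<omega> s) \<in> borel_measurable M"
    and deriv: "\<And>\<omega> \<tau>. \<omega> \<in> space M \<Longrightarrow> \<tau> \<in> {0..T} \<Longrightarrow>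
                  (g \<omega> has_real_derivative g' \<omega> \<tau>) (at \<tau> within {0..T})"
    and g'_int: "integrable (M \<Otimes>\<^sub>M lborel) (\<lambda>(\<omega>, \<tau>). indicator {0..T} \<tau> * g' \<omega> \<tau>)"
  shows "(\<integral>\<omega>. g \<omega> (etime_cap T (e1 \<omega>)) - g \<omega> (etime_cap T (e0 \<omega>)) \<partial>M) =
           (LINT \<tau>:{0..T}|lborel. cond_exp_event M (\<lambda>\<omega>. g' \<omega> \<tau>) (etime_between M e0 e1 \<tau>)
                                   * measure M (etime_between M e0 e1 \<tau>))
         - (LINT \<tau>:{0..T}|lborel. cond_exp_event M (\<lambda>\<omega>. g' \<omega> \<tau>) (etime_between M e1 e0 \<tau>)
                                   * measure M (etime_between M e1 e0 \<tau>))"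
proof -
  interpret finite_measure M
    by (rule M)
  interpret PS: pair_sigma_finite M lborel
    by (intro pair_sigma_finite.intro sigma_finite_measure_axioms lborel.sigma_finite_measure_axioms)
  define I where "I e e' \<omega> = (\<integral>\<tau>. indicator {0..T} \<tau> * g' \<omega> \<tau> * indicator (etime_between M e e' \<tau>) \<omega> \<partial>lborel)"
    for e e' \<omega>
  note Fubini01 = set_integral_cond_exp_event_Fubini[OF pred_etime_between_pair[OF e0 e1]
      sets_etime_between[OF e0 e1] g'_int, folded I_def]
  note Fubini10 = set_integral_cond_exp_event_Fubini[OF pred_etime_between_pair[OF e1 e0]
      sets_etime_between[OF e1 e0] g'_int, folded I_def]
  have range: "e \<omega> = Some s \<Longrightarrow> s \<in> {0..T}" if "random_event_time M T e" "\<omega> \<in> space M" for e \<omega> s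
    using that by (auto simp: random_event_time_def)
  have g_cap_meas: "(\<lambda>\<omega>. g \<omega> (etime_cap T (e \<omega>))) \<in> borel_measurable M" if e: "random_event_time M T e" for e
  proof (rule borel_measurable_continuous_on_compose[OF \<open>0 \<le> T\<close> g_meas])
    show "continuous_on {0..T} (g \<omega>)" if "\<omega> \<in> space M" for \<omega>
      using deriv[OF that] DERIV_continuous continuous_on_eq_continuous_within by blast
    show "(\<lambda>\<omega>. etime_cap T (e \<omega>)) \<in> borel_measurable M"
      using e by (rule borel_measurable_etime_cap)
    show "etime_cap T (e \<omega>) \<in> {0..T}" if "\<omega> \<in> space M" for \<omega>
      using range[OF e that] \<open>0 \<le> T\<close> by (rule etime_cap_range[rotated])
  qed
  have "AE \<omega> in M. g \<omega> (etime_cap T (e1 \<omega>)) - g \<omega> (etime_cap T (e0 \<omega>)) = I e0 e1 \<omega> - I e1 e0 \<omega>"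
    using PS.AE_integrable_fst[OF g'_int] AE_space
  proof eventually_elim
    case (elim \<omega>)
    then have \<omega>: "\<omega> \<in> space M"
      by simp
    have ind: "indicator (etime_between M e e' \<tau>) \<omega> = of_bool (etime_le (e \<omega>) \<tau> \<and> \<not> etime_le (e' \<omega>) \<tau>)"
      for e e' \<tau>
      using \<omega> by (simp add: etime_between_def indicator_def)
    show ?case
      unfolding I_def ind
      using integral_etime_between_diff[where ?e0.0="e0 \<omega>" and ?e1.0="e1 \<omega>",
              OF \<open>0 \<le> T\<close> range[OF e0 \<omega>] range[OF e1 \<omega>] deriv[OF \<omega>]] elim(1)
      by simp
  qed
  then have "(\<integral>\<omega>. g \<omega> (etime_cap T (e1 \<omega>)) - g \<omega> (etime_cap T (e0 \<omega>)) \<partial>M) = (\<integral>\<omega>. I e0 e1 \<omega> - I e1 e0 \<omega> \<partial>M)"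
    using g_cap_meas[OF e0] g_cap_meas[OF e1] Fubini01(1) Fubini10(1)
    by (intro integral_cong_AE) auto
  also have "\<dots> = (\<integral>\<omega>. I e0 e1 \<omega> \<partial>M) - (\<integral>\<omega>. I e1 e0 \<omega> \<partial>M)"
    using Fubini01(1) Fubini10(1) by (rule Bochner_Integration.integral_diff)
  finally show ?thesis
    by (simp only: Fubini01(2) Fubini10(2))
qed

lemma counting_pot_time:
  assumes "finite (P z \<omega>)" "P z \<omega> \<subseteq> {0..T}" "single_point T (counting (P z \<omega>))"
  shows "counting (P z \<omega>) \<tau> = (if etime_le (pot_time T P z \<omega>) \<tau> then 1 else 0)"
  using counting_single_point(1)[OF assms] by (simp add: pot_time_def)

lemma random_event_time_pot_time:
  assumes P_fin: "\<And>\<omega>. \<omega> \<in> space M \<Longrightarrow> finite (P z \<omega>) \<and> P z \<omega> \<subseteq> {0..T}"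
    and N_meas: "\<And>t. (\<lambda>\<omega>. counting (P z \<omega>) t) \<in> measurable M (count_space UNIV)"
    and single: "\<And>\<omega>. \<omega> \<in> space M \<Longrightarrow> single_point T (counting (P z \<omega>))"
  shows "random_event_time M T (pot_time T P z)"
  unfolding random_event_time_def
proof safe
  fix \<tau>
  have "etime_le (pot_time T P z \<omega>) \<tau> \<longleftrightarrow> counting (P z \<omega>) \<tau> \<noteq> 0" if "\<omega> \<in> space M" for \<omega>
    using counting_pot_time[of P z \<omega> T \<tau>] P_fin[OF that] single[OF that] by simp
  then have "{\<omega> \<in> space M. etime_le (pot_time T P z \<omega>) \<tau>} = {\<omega> \<in> space M. counting (P z \<omega>) \<tau> \<noteq> 0}"
    by blast
  also have "\<dots> \<in> sets M"
    using N_meas[of \<tau>] by measurable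
  finally show "{\<omega> \<in> space M. etime_le (pot_time T P z \<omega>) \<tau>} \<in> sets M" .
next
  fix \<omega> s assume "\<omega> \<in> space M" "pot_time T P z \<omega> = Some s"
  then show "s \<in> {0..T}"
    using counting_single_point(2)[of "P z \<omega>" T s] P_fin single by (simp add: pot_time_def)
qed

lemma between_event_eq_etime_between:
  "between_event M T P a b = etime_between M (pot_time T P a) (pot_time T P b)"
  by (simp add: fun_eq_iff between_event_def etime_between_def)

lemma etime_between_eq_empty:
  "(\<And>\<omega>. \<omega> \<in> space M \<Longrightarrow> etime_leq (e \<omega>) (e' \<omega>)) \<Longrightarrow> etime_between M e' e \<tau> = {}"
  unfolding etime_between_def using etime_le_mono by blast

lemma ACE_Y_eq_integral_etime_cap:
  assumes no_anticipation: "\<And>\<omega> \<tau> \<tau>'. \<omega> \<in> space M \<Longrightarrow> time_le_etime t \<tau> \<Longrightarrow> time_le_etime t \<tau>' \<Longrightarrow>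
                              Y \<omega> \<tau> t = Y \<omega> \<tau>' t"
    and "t \<le> T"
  shows "ACE_Y M T P Y t = (\<integral>\<omega>. Y \<omega> (Some (etime_cap T (pot_time T P True \<omega>))) t
                               - Y \<omega> (Some (etime_cap T (pot_time T P False \<omega>))) t \<partial>M)"
proof -
  have "Y \<omega> None t = Y \<omega> (Some T) t" if "\<omega> \<in> space M" for \<omega>
    using no_anticipation[OF that] \<open>t \<le> T\<close> by simp
  then have cap: "Y \<omega> e t = Y \<omega> (Some (etime_cap T e)) t" if "\<omega> \<in> space M" for \<omega> e
    using that by (cases e) (simp_all add: etime_cap_def)
  show ?thesis
    unfolding ACE_Y_def by (intro Bochner_Integration.integral_cong refl) (metis cap)
qed

lemma ACE_N_eq_measure_etime_between:
  assumes "finite_measure M"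
    and counting_eq: "\<And>z \<omega> \<tau>. \<omega> \<in> space M \<Longrightarrow>
                        counting (P z \<omega>) \<tau> = (if etime_le (pot_time T P z \<omega>) \<tau> then 1 else 0)"
    and mono: "\<And>\<omega>. \<omega> \<in> space M \<Longrightarrow> etime_leq (pot_time T P True \<omega>) (pot_time T P False \<omega>)"
    and sets: "etime_between M (pot_time T P True) (pot_time T P False) \<tau> \<in> sets M"
  shows "ACE_N M P \<tau> = measure M (etime_between M (pot_time T P True) (pot_time T P False) \<tau>)"
proof -
  have "ACE_N M P \<tau> = (\<integral>\<omega>. indicator (etime_between M (pot_time T P True) (pot_time T P False) \<tau>) \<omega> \<partial>M)"
    unfolding ACE_N_def
  proof (intro Bochner_Integration.integral_cong refl)
    fix \<omega> assume \<omega>: "\<omega> \<in> space M"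
    then show "real (counting (P True \<omega>) \<tau>) - real (counting (P False \<omega>) \<tau>) =
               indicator (etime_between M (pot_time T P True) (pot_time T P False) \<tau>) \<omega>"
      using mono[OF \<omega>] etime_le_mono by (auto simp: counting_eq etime_between_def indicator_def)
  qed
  also have "\<dots> = measure M (etime_between M (pot_time T P True) (pot_time T P False) \<tau>)"
    using sets \<open>finite_measure M\<close> by (simp add: finite_measure.emeasure_finite)
  finally show ?thesis .
qed

lemma ACE_Y_eq_between_integrals:
  fixes dY :: "'a \<Rightarrow> real \<Rightarrow> real"
  assumes M: "finite_measure M" and "0 \<le> T" and t: "t \<in> {0..T}"
    and e: "\<And>z. random_event_time M T (pot_time T P z)"
    and Y_meas: "\<And>\<tau>. (\<lambda>\<omega>. Y \<omega> \<tau> t) \<in> borel_measurable M"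
    and no_anticipation: "\<And>\<omega> \<tau> \<tau>'. \<omega> \<in> space M \<Longrightarrow> time_le_etime t \<tau> \<Longrightarrow> time_le_etime t \<tau>' \<Longrightarrow>
                            Y \<omega> \<tau> t = Y \<omega> \<tau>' t"
    and deriv: "\<And>\<omega> \<tau>. \<omega> \<in> space M \<Longrightarrow> \<tau> \<in> {0..T} \<Longrightarrow>
                  ((\<lambda>s. Y \<omega> (Some s) t) has_real_derivative dY \<omega> \<tau>) (at \<tau> within {0..T})"
    and dY_int: "integrable (M \<Otimes>\<^sub>M lborel) (\<lambda>(\<omega>, \<tau>). indicator {0..T} \<tau> * dY \<omega> \<tau>)"
  shows "ACE_Y M T P Y t =
           (LINT \<tau>:{0..T}|lborel. cond_exp_event M (\<lambda>\<omega>. dY \<omega> \<tau>) (between_event M T P False True \<tau>)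
                                  * measure M (between_event M T P False True \<tau>))
         - (LINT \<tau>:{0..T}|lborel. cond_exp_event M (\<lambda>\<omega>. dY \<omega> \<tau>) (between_event M T P True False \<tau>)
                                  * measure M (between_event M T P True False \<tau>))"
proof -
  have "ACE_Y M T P Y t = (\<integral>\<omega>. Y \<omega> (Some (etime_cap T (pot_time T P True \<omega>))) t
                              - Y \<omega> (Some (etime_cap T (pot_time T P False \<omega>))) t \<partial>M)"
    using t by (intro ACE_Y_eq_integral_etime_cap no_anticipation) auto
  also have "\<dots> = (LINT \<tau>:{0..T}|lborel. cond_exp_event M (\<lambda>\<omega>. dY \<omega> \<tau>) (between_event M T P False True \<tau>)
                                         * measure M (between_event M T P False True \<tau>))
                - (LINT \<tau>:{0..T}|lborel. cond_exp_event M (\<lambda>\<omega>. dY \<omega> \<tau>) (between_event M T P True False \<tau>)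
                                         * measure M (between_event M T P True False \<tau>))"
    unfolding between_event_eq_etime_between
    by (rule integral_diff_etime_cap_eq_between[OF M \<open>0 \<le> T\<close> e e Y_meas deriv dY_int])
  finally show ?thesis .
qed

theorem theorem1:
  fixes M :: "'a measure" and T :: real
    and Z :: "'a \<Rightarrow> bool"
    and P :: "bool \<Rightarrow> 'a \<Rightarrow> real set"
    and Y :: "'a \<Rightarrow> real option \<Rightarrow> real \<Rightarrow> real"
    and dY :: "'a \<Rightarrow> real \<Rightarrow> real \<Rightarrow> real"
  assumes prob: "prob_space M"
    and Z_meas: "Z \<in> measurable M (count_space UNIV)"
    and P_fin: "\<And>z \<omega>. \<omega> \<in> space M \<Longrightarrow> finite (P z \<omega>) \<and> P z \<omega> \<subseteq> {0..T}"
    and N_meas: "\<And>z t. (\<lambda>\<omega>. counting (P z \<omega>) t) \<in> measurable M (count_space UNIV)"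
    and Y_meas: "\<And>\<tau> t. (\<lambda>\<omega>. Y \<omega> \<tau> t) \<in> borel_measurable M"
    and single: "\<And>z \<omega>. \<omega> \<in> space M \<Longrightarrow> single_point T (counting (P z \<omega>))"
    and randomization: "prob_space.indep_set M
          {{\<omega> \<in> space M. Z \<omega> = z} | z. True} (potential_sigma M P Y)"
    and no_anticipation: "\<And>\<omega> t \<tau> \<tau>'. \<omega> \<in> space M \<Longrightarrow> t \<in> {0..T} \<Longrightarrow>
          time_le_etime t \<tau> \<Longrightarrow> time_le_etime t \<tau>' \<Longrightarrow> Y \<omega> \<tau> t = Y \<omega> \<tau>' t"
    and deriv: "\<And>\<omega> t \<tau>. \<omega> \<in> space M \<Longrightarrow> t \<in> {0..T} \<Longrightarrow> \<tau> \<in> {0..T} \<Longrightarrow>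
          ((\<lambda>s. Y \<omega> (Some s) t) has_real_derivative dY \<omega> \<tau> t) (at \<tau> within {0..T})"
    and deriv_int: "\<And>t. t \<in> {0..T} \<Longrightarrow>
          integrable (M \<Otimes>\<^sub>M lborel) (\<lambda>(\<omega>, \<tau>). indicator {0..T} \<tau> * dY \<omega> \<tau> t)"
  shows "(\<forall>t\<in>{0..T}. ACE_Y M T P Y t =
            (LINT \<tau>:{0..T}|lborel. cond_exp_event M (\<lambda>\<omega>. dY \<omega> \<tau> t) (between_event M T P False True \<tau>)
                                   * measure M (between_event M T P False True \<tau>))
          - (LINT \<tau>:{0..T}|lborel. cond_exp_event M (\<lambda>\<omega>. dY \<omega> \<tau> t) (between_event M T P True False \<tau>)
                                   * measure M (between_event M T P True False \<tau>)))
       \<and> ((\<forall>\<omega>\<in>space M. etime_leq (pot_time T P True \<omega>) (pot_time T P False \<omega>)) \<longrightarrow>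
          (\<forall>t\<in>{0..T}. ACE_Y M T P Y t =
            - (LINT \<tau>:{0..T}|lborel. cond_exp_event M (\<lambda>\<omega>. dY \<omega> \<tau> t) (between_event M T P True False \<tau>)
                                     * ACE_N M P \<tau>)))"
proof (cases "0 \<le> T")
  case False
  then show ?thesis
    by auto
next
  case True
  interpret prob_space M
    by (rule prob)
  have e: "random_event_time M T (pot_time T P z)" for z
    using P_fin N_meas single by (rule random_event_time_pot_time)
  have counting_eq: "counting (P z \<omega>) \<tau> = (if etime_le (pot_time T P z \<omega>) \<tau> then 1 else 0)"
    if "\<omega> \<in> space M" for z \<omega> \<tau>
    using P_fin[OF that] single[OF that] by (intro counting_pot_time) auto
  show ?thesis
    using ACE_Y_eq_between_integrals[OF finite_measure_axioms True _ e Y_meas no_anticipation deriv deriv_int]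
    by (simp add: between_event_eq_etime_between etime_between_eq_empty set_lebesgue_integral_def
        ACE_N_eq_measure_etime_between[OF finite_measure_axioms counting_eq] sets_etime_between[OF e e])
qed

end
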